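(* Let $\alpha\in(1,3)$, $n=2$ and $\mu>0$, and consider the planar Maxwell-ring potential described in the context, in polar coordinates $u=re^{i\varphi}$. Then its critical points are exactly the $\mathbb{Z}_2$-orbits (orbits under $u\mapsto -u$) of: two saddle points $u=r_2$ and $u=r_1$ with $0<r_2<1<r_1$, and one minimum point $u=r_3e^{i\pi/2}$ with $r_3>1$; there are no other critical points.
   Context: Let $\zeta=\pi$, $\phi_\alpha'(r)=-r^{-\alpha}$, $s=2^{-\alpha}$ (i.e. $s=2^{-\alpha}\sum_{j=1}^{n-1}\sin^{-(\alpha-1)}(j\zeta/2)$ with $n=2$). The (rescaled) planar potential of a satellite attracted by two unit masses at $\pm1$ and a central mass $\mu$ at $0$ (identifying $\mathbb{R}^2=\mathbb{C}$) is $$V(u)=\frac12\|u\|^2+\sum_{j=1}^2\frac1{s+\mu}\phi_\alpha(\|u-e^{ij\pi}\|)+\frac{\mu}{s+\mu}\phi_\alpha(\|u\|).$$ *)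

theory Defs
  imports "HOL-Analysis.Analysis"
begin

text \<open>A primitive of phi' r = - r^(-alpha) (alpha > 1); additive constants are irrelevant.\<close>
definition phi :: "real \<Rightarrow> real \<Rightarrow> real" where
  "phi \<alpha> r = r powr (1 - \<alpha>) / (\<alpha> - 1)"

text \<open>s = 2^(-alpha) * sum_{j=1}^{n-1} sin^(-(alpha-1))(j zeta/2) with n = 2, zeta = pi.\<close>
definition sMax :: "real \<Rightarrow> real" where
  "sMax \<alpha> = 2 powr (-\<alpha>)"

definition V :: "real \<Rightarrow> real \<Rightarrow> complex \<Rightarrow> real" where
  "V \<alpha> \<mu> u = (norm u)\<^sup>2 / 2
     + (\<Sum>j\<in>{1::nat, 2}. phi \<alpha> (norm (u - cis (real j * pi))) / (sMax \<alpha> + \<mu>))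
     + \<mu> / (sMax \<alpha> + \<mu>) * phi \<alpha> (norm u)"

definition critical_point :: "(complex \<Rightarrow> real) \<Rightarrow> complex \<Rightarrow> bool" where
  "critical_point f u \<longleftrightarrow> u \<notin> {0, 1, -1} \<and> (f has_derivative (\<lambda>h. 0)) (at u)"

definition local_min_pt :: "(complex \<Rightarrow> real) \<Rightarrow> complex \<Rightarrow> bool" where
  "local_min_pt f u \<longleftrightarrow> (\<exists>e>0. \<forall>v\<in>ball u e. f u \<le> f v)"

definition local_max_pt :: "(complex \<Rightarrow> real) \<Rightarrow> complex \<Rightarrow> bool" where
  "local_max_pt f u \<longleftrightarrow> (\<exists>e>0. \<forall>v\<in>ball u e. f v \<le> f u)"

definition saddle_pt :: "(complex \<Rightarrow> real) \<Rightarrow> complex \<Rightarrow> bool" where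
  "saddle_pt f u \<longleftrightarrow> critical_point f u \<and> \<not> local_min_pt f u \<and> \<not> local_max_pt f u"

definition minimum_pt :: "(complex \<Rightarrow> real) \<Rightarrow> complex \<Rightarrow> bool" where
  "minimum_pt f u \<longleftrightarrow> critical_point f u \<and> local_min_pt f u"

end

theory Submission
  imports Defs "HOL-Real_Asymp.Real_Asymp"
begin

text \<open>
  Writing \<open>E w = \<bar>w\<bar> powr (-\<alpha>-1)\<close> and \<open>c = 1 / (s + \<mu>)\<close>, the gradient of \<open>V\<close> is
  \<open>q u \<cdot> u + c (E (u - 1) - E (u + 1))\<close> with a real coefficient \<open>q u\<close>. At a critical point off
  the real axis the imaginary part forces \<open>q u = 0\<close>, and then the real part forces
  \<open>E (u - 1) = E (u + 1)\<close>: the point lies on the imaginary axis, where \<open>q\<close> is strictly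
  increasing in \<open>\<bar>Im u\<bar>\<close>, negative at \<open>\<bar>Im u\<bar> = 1\<close> and tends to 1, so there is exactly
  the pair \<open>\<plusminus>r\<^sub>3 i\<close>. On the real axis the gradient is odd and strictly increasing on
  \<open>(0,1)\<close> and on \<open>(1,\<infinity>)\<close>, running from \<open>-\<infinity>\<close> to \<open>+\<infinity>\<close> on each, so there are exactly
  \<open>\<plusminus>r\<^sub>2\<close> and \<open>\<plusminus>r\<^sub>1\<close>. There \<open>V\<close> increases along the axis but decreases vertically
  (\<open>q < 0\<close>), so these are saddles. Finally \<open>V\<close> tends to \<open>+\<infinity>\<close> at the masses and at
  infinity, so it attains a global minimum; being critical and no saddle it is \<open>\<plusminus>r\<^sub>3 i\<close>,
  and by the symmetry \<open>V (-u) = V u\<close> both are minima.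
\<close>

lemma local_min_pt_uminus_iff:
  fixes f :: "complex \<Rightarrow> real"
  assumes even: "\<And>v. f (- v) = f v"
  shows "local_min_pt f (- p) \<longleftrightarrow> local_min_pt f p"
proof -
  have *: "local_min_pt f (- q)" if "local_min_pt f q" for q
  proof -
    obtain e where "e > 0" and min: "\<forall>v\<in>ball q e. f q \<le> f v"
      using \<open>local_min_pt f q\<close> by (auto simp: local_min_pt_def)
    have "f (- q) \<le> f v" if "v \<in> ball (- q) e" for v
    proof -
      have "- v \<in> ball q e"
        using that dist_minus[of q "- v"] by simp
      with min have "f q \<le> f (- v)" by blast
      with even[of q] even[of v] show ?thesis by simp
    qed
    with \<open>e > 0\<close> show ?thesis by (auto simp: local_min_pt_def)
  qed
  show ?thesis using *[of p] *[of "- p"] by auto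
qed

lemma local_min_pt_if_min_on_open:
  assumes "open S" "w \<in> S" "\<And>v. v \<in> S \<Longrightarrow> f w \<le> f v"
  shows "local_min_pt f w"
proof -
  obtain e where "e > 0" "ball w e \<subseteq> S"
    using assms(1,2) open_contains_ball by blast
  with assms(3) show ?thesis
    unfolding local_min_pt_def by blast
qed

lemma not_local_min_pt_if_descent:
  fixes f :: "complex \<Rightarrow> real"
  assumes "0 < \<delta>"
    and deriv: "\<And>t. 0 \<le> t \<Longrightarrow> t < \<delta> \<Longrightarrow> ((\<lambda>t. f (p + t *\<^sub>R d)) has_real_derivative f' t) (at t)"
    and descent: "\<And>t. 0 < t \<Longrightarrow> t < \<delta> \<Longrightarrow> f' t < 0"
  shows "\<not> local_min_pt f p"
proof
  assume "local_min_pt f p"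
  then obtain e where "e > 0" and min: "\<forall>v\<in>ball p e. f p \<le> f v"
    by (auto simp: local_min_pt_def)
  have "((\<lambda>t. p + t *\<^sub>R d) \<longlongrightarrow> p) (at_right 0)"
    by (auto intro!: tendsto_eq_intros)
  then have "eventually (\<lambda>t. p + t *\<^sub>R d \<in> ball p e) (at_right 0)"
    using \<open>e > 0\<close> by (intro topological_tendstoD) auto
  with eventually_at_right_real[OF \<open>0 < \<delta>\<close>]
  have "eventually (\<lambda>t. t \<in> {0<..<\<delta>} \<and> p + t *\<^sub>R d \<in> ball p e) (at_right 0)"
    by (rule eventually_conj)
  then obtain t where t: "0 < t" "t < \<delta>" and "p + t *\<^sub>R d \<in> ball p e"
    using eventually_happens'[of "at_right (0::real)"] by auto
  have "continuous_on {0..t} (\<lambda>t. f (p + t *\<^sub>R d))"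
    using t by (intro continuous_at_imp_continuous_on ballI DERIV_isCont[OF deriv]) auto
  then have "f (p + t *\<^sub>R d) < f (p + 0 *\<^sub>R d)"
  proof (rule DERIV_neg_imp_decreasing_open[OF \<open>0 < t\<close>, rotated])
    fix s :: real
    assume "0 < s" "s < t"
    with t show "\<exists>y. ((\<lambda>t. f (p + t *\<^sub>R d)) has_real_derivative y) (at s) \<and> y < 0"
      by (intro exI[of _ "f' s"] conjI deriv descent) simp_all
  qed
  moreover have "f p \<le> f (p + t *\<^sub>R d)"
    using min \<open>p + t *\<^sub>R d \<in> ball p e\<close> by blast
  ultimately show False
    by simp
qed

lemma not_local_max_pt_if_ascent:
  fixes f :: "complex \<Rightarrow> real"
  assumes "0 < \<delta>"
    and "\<And>t. 0 \<le> t \<Longrightarrow> t < \<delta> \<Longrightarrow> ((\<lambda>t. f (p + t *\<^sub>R d)) has_real_derivative f' t) (at t)"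
    and "\<And>t. 0 < t \<Longrightarrow> t < \<delta> \<Longrightarrow> 0 < f' t"
  shows "\<not> local_max_pt f p"
proof -
  have "\<not> local_min_pt (\<lambda>v. - f v) p"
    using assms by (intro not_local_min_pt_if_descent[where f' = "\<lambda>t. - f' t"] DERIV_minus) auto
  then show ?thesis by (simp add: local_min_pt_def local_max_pt_def)
qed

lemma exists_root_if_signs_eventually:
  fixes f :: "real \<Rightarrow> real"
  assumes "connected S" "continuous_on S f"
    and "eventually (\<lambda>x. x \<in> S \<and> f x < 0) F" "F \<noteq> bot"
    and "eventually (\<lambda>x. x \<in> S \<and> 0 < f x) F'" "F' \<noteq> bot"
  shows "\<exists>z\<in>S. f z = 0"
proof -
  obtain x where "x \<in> S" "f x < 0"
    using eventually_happens'[OF assms(4,3)] by blast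
  obtain y where "y \<in> S" "0 < f y"
    using eventually_happens'[OF assms(6,5)] by blast
  have "connected (f ` S)"
    using assms(2,1) by (rule connected_continuous_image)
  then have "f x \<le> 0 \<Longrightarrow> 0 \<le> f y \<Longrightarrow> 0 \<in> f ` S"
    unfolding connected_iff_interval using \<open>x \<in> S\<close> \<open>y \<in> S\<close> by blast
  then have "0 \<in> f ` S"
    using \<open>f x < 0\<close> \<open>0 < f y\<close> by simp
  then show ?thesis by auto
qed

definition force_factor :: "real \<Rightarrow> 'a::real_normed_vector \<Rightarrow> real" where
  "force_factor \<alpha> w = norm w powr (- \<alpha> - 1)"

definition coupling :: "real \<Rightarrow> real \<Rightarrow> real" where
  "coupling \<alpha> \<mu> = 1 / (sMax \<alpha> + \<mu>)"

definition gradV :: "real \<Rightarrow> real \<Rightarrow> complex \<Rightarrow> complex" where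
  "gradV \<alpha> \<mu> u = u
     - (coupling \<alpha> \<mu> * force_factor \<alpha> (u - 1)) *\<^sub>R (u - 1)
     - (coupling \<alpha> \<mu> * force_factor \<alpha> (u + 1)) *\<^sub>R (u + 1)
     - (\<mu> * coupling \<alpha> \<mu> * force_factor \<alpha> u) *\<^sub>R u"

lemma coupling_pos: "0 < \<mu> \<Longrightarrow> 0 < coupling \<alpha> \<mu>"
  by (simp add: coupling_def sMax_def add_pos_pos)

lemma force_factor_uminus [simp]: "force_factor \<alpha> (- w) = force_factor \<alpha> w"
  by (simp add: force_factor_def)

lemma force_factor_strict_antimono:
  assumes "- 1 < \<alpha>" "0 < norm w" "norm w < norm w'"
  shows "force_factor \<alpha> w' < force_factor \<alpha> w"
  using assms by (simp add: force_factor_def powr_less_mono2_neg)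

lemma force_factor_eq_imp_norm_eq:
  assumes "- 1 < \<alpha>" "w \<noteq> 0" "w' \<noteq> 0" "force_factor \<alpha> w = force_factor \<alpha> w'"
  shows "norm w = norm w'"
  using force_factor_strict_antimono[of \<alpha> w w'] force_factor_strict_antimono[of \<alpha> w' w] assms
  by (cases "norm w" "norm w'" rule: linorder_cases) auto

lemma force_factor_mult_norm: "force_factor \<alpha> w * norm w = norm w powr (- \<alpha>)"
  using powr_mult_base[of "norm w" "- \<alpha> - 1"] by (simp add: force_factor_def mult.commute)

lemma has_derivative_phi_norm_diff:
  fixes w a :: "'a::real_inner"
  assumes "\<alpha> \<noteq> 1" "w \<noteq> a"
  shows "((\<lambda>w. phi \<alpha> (norm (w - a))) has_derivative
           (\<lambda>h. - (force_factor \<alpha> (w - a) * ((w - a) \<bullet> h)))) (at w)"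
proof -
  define r where "r = norm (w - a)"
  have r: "0 < r" using assms by (simp add: r_def)
  have "((\<lambda>w. norm (w - a)) has_derivative (\<lambda>h. ((w - a) \<bullet> h) / r)) (at w)"
    using has_derivative_compose[OF has_derivative_diff[OF has_derivative_ident has_derivative_const]
        has_derivative_norm[of "w - a"]] assms
    by (simp add: r_def sgn_div_norm inner_commute divide_inverse mult.commute)
  then have "((\<lambda>w. phi \<alpha> (norm (w - a))) has_derivative
      (\<lambda>h. r powr (1 - \<alpha>) * (((w - a) \<bullet> h) / r * (1 - \<alpha>) / r) / (\<alpha> - 1))) (at w)"
    unfolding phi_def r_def using assms by (auto intro!: derivative_eq_intros)
  moreover have "r powr (1 - \<alpha>) * (x / r * (1 - \<alpha>) / r) / (\<alpha> - 1) = - (r powr (- \<alpha> - 1) * x)" for x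
  proof -
    have "r * r powr (- \<alpha> - 1) = r powr (- \<alpha>)" "r * r powr (- \<alpha>) = r powr (1 - \<alpha>)"
      using powr_mult_base[of r "- \<alpha> - 1"] powr_mult_base[of r "- \<alpha>"] r by simp_all
    then have "r powr (1 - \<alpha>) = r powr (- \<alpha> - 1) * r * r"
      by (simp add: mult.commute mult.left_commute)
    then show ?thesis
      using r assms by (simp add: field_simps)
  qed
  ultimately show ?thesis
    by (simp add: force_factor_def r_def)
qed

lemma V_eq:
  "V \<alpha> \<mu> u = (norm u)\<^sup>2 / 2 + coupling \<alpha> \<mu> * phi \<alpha> (norm (u - 1))
     + coupling \<alpha> \<mu> * phi \<alpha> (norm (u + 1)) + \<mu> * coupling \<alpha> \<mu> * phi \<alpha> (norm u)"
proof -
  have "cis (2 * pi) = 1" by (simp add: complex_eq_iff)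
  then show ?thesis
    by (simp add: V_def coupling_def add_divide_distrib algebra_simps)
qed

lemma has_derivative_V:
  assumes "1 < \<alpha>" "u \<notin> {0, 1, -1}"
  shows "(V \<alpha> \<mu> has_derivative (\<lambda>h. gradV \<alpha> \<mu> u \<bullet> h)) (at u)"
proof -
  have "\<alpha> \<noteq> 1" "u \<noteq> 0" "u \<noteq> 1" "u \<noteq> - 1" using assms by auto
  then have d1: "((\<lambda>w. phi \<alpha> (norm (w - 1))) has_derivative
        (\<lambda>h. - (force_factor \<alpha> (u - 1) * ((u - 1) \<bullet> h)))) (at u)"
    and d2: "((\<lambda>w. phi \<alpha> (norm (w + 1))) has_derivative
        (\<lambda>h. - (force_factor \<alpha> (u + 1) * ((u + 1) \<bullet> h)))) (at u)"
    and d0: "((\<lambda>w. phi \<alpha> (norm w)) has_derivative (\<lambda>h. - (force_factor \<alpha> u * (u \<bullet> h)))) (at u)"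
    using has_derivative_phi_norm_diff[of \<alpha> u 1] has_derivative_phi_norm_diff[of \<alpha> u "- 1"]
      has_derivative_phi_norm_diff[of \<alpha> u 0]
    by simp_all
  have "((\<lambda>w. w \<bullet> w / 2) has_derivative (\<lambda>h. (u \<bullet> h + h \<bullet> u) / 2)) (at u)"
    using has_derivative_divide[OF has_derivative_inner[OF has_derivative_ident has_derivative_ident]
        has_derivative_const[of "2::real"]]
    by simp
  then have d: "((\<lambda>w. (norm w)\<^sup>2 / 2) has_derivative (\<lambda>h. u \<bullet> h)) (at u)"
    by (simp add: power2_norm_eq_inner inner_commute)
  have "(V \<alpha> \<mu> has_derivative (\<lambda>h. u \<bullet> h
      + coupling \<alpha> \<mu> * - (force_factor \<alpha> (u - 1) * ((u - 1) \<bullet> h))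
      + coupling \<alpha> \<mu> * - (force_factor \<alpha> (u + 1) * ((u + 1) \<bullet> h))
      + \<mu> * coupling \<alpha> \<mu> * - (force_factor \<alpha> u * (u \<bullet> h)))) (at u)"
    unfolding V_eq[abs_def] by (intro has_derivative_add has_derivative_mult_right d d0 d1 d2)
  then show ?thesis
    by (simp add: gradV_def inner_diff_left inner_add_left algebra_simps)
qed

lemma critical_point_V_iff:
  assumes "1 < \<alpha>"
  shows "critical_point (V \<alpha> \<mu>) u \<longleftrightarrow> u \<notin> {0, 1, -1} \<and> gradV \<alpha> \<mu> u = 0"
proof (cases "u \<in> {0, 1, -1}")
  case False
  note deriv = has_derivative_V[OF assms False, of \<mu>]
  show ?thesis
  proof
    assume "critical_point (V \<alpha> \<mu>) u"
    then have "(\<lambda>h. gradV \<alpha> \<mu> u \<bullet> h) = (\<lambda>h. 0)"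
      using has_derivative_unique[OF deriv] by (simp add: critical_point_def)
    then have "gradV \<alpha> \<mu> u \<bullet> gradV \<alpha> \<mu> u = 0" by (rule fun_cong)
    with False show "u \<notin> {0, 1, -1} \<and> gradV \<alpha> \<mu> u = 0" by simp
  next
    assume "u \<notin> {0, 1, -1} \<and> gradV \<alpha> \<mu> u = 0"
    with deriv show "critical_point (V \<alpha> \<mu>) u" by (simp add: critical_point_def)
  qed
qed (simp add: critical_point_def)

lemma uminus_diff_one: "- u - 1 = - (u + 1)" and uminus_add_one: "- u + 1 = - (u - 1)"
  for u :: complex
  by simp_all

lemma V_uminus: "V \<alpha> \<mu> (- u) = V \<alpha> \<mu> u"
  unfolding V_eq uminus_diff_one uminus_add_one norm_minus_cancel by (simp add: add_ac)

lemma gradV_uminus: "gradV \<alpha> \<mu> (- u) = - gradV \<alpha> \<mu> u"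
  unfolding gradV_def uminus_diff_one uminus_add_one force_factor_uminus by (simp add: algebra_simps)

definition gradV_coeff :: "real \<Rightarrow> real \<Rightarrow> complex \<Rightarrow> real" where
  "gradV_coeff \<alpha> \<mu> u = 1 - coupling \<alpha> \<mu> * force_factor \<alpha> (u - 1)
     - coupling \<alpha> \<mu> * force_factor \<alpha> (u + 1) - \<mu> * coupling \<alpha> \<mu> * force_factor \<alpha> u"

lemma gradV_eq:
  "gradV \<alpha> \<mu> u = gradV_coeff \<alpha> \<mu> u *\<^sub>R u
     + (coupling \<alpha> \<mu> * (force_factor \<alpha> (u - 1) - force_factor \<alpha> (u + 1))) *\<^sub>R 1"
  by (simp add: gradV_def gradV_coeff_def algebra_simps)

lemma Re_gradV:
  "Re (gradV \<alpha> \<mu> u) = gradV_coeff \<alpha> \<mu> u * Re u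
     + coupling \<alpha> \<mu> * (force_factor \<alpha> (u - 1) - force_factor \<alpha> (u + 1))"
  by (simp add: gradV_eq)

lemma Im_gradV: "Im (gradV \<alpha> \<mu> u) = gradV_coeff \<alpha> \<mu> u * Im u"
  by (simp add: gradV_eq)

lemma gradV_coeff_uminus: "gradV_coeff \<alpha> \<mu> (- u) = gradV_coeff \<alpha> \<mu> u"
  unfolding gradV_coeff_def uminus_diff_one uminus_add_one force_factor_uminus by simp

text \<open>The imaginary part of the gradient kills \<open>gradV_coeff\<close>; the real part then says that
  \<open>u\<close> is equidistant from \<open>1\<close> and \<open>-1\<close>.\<close>

lemma gradV_zero_off_real_axis:
  assumes "- 1 < \<alpha>" "0 < \<mu>" "u \<notin> {0, 1, -1}" "Im u \<noteq> 0" "gradV \<alpha> \<mu> u = 0"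
  shows "Re u = 0"
proof -
  have "gradV_coeff \<alpha> \<mu> u = 0"
    using Im_gradV[of \<alpha> \<mu> u] assms(4,5) by simp
  then have "force_factor \<alpha> (u - 1) = force_factor \<alpha> (u + 1)"
    using Re_gradV[of \<alpha> \<mu> u] assms(5) coupling_pos[OF assms(2), of \<alpha>] by simp
  moreover have "u - 1 \<noteq> 0" "u + 1 \<noteq> 0"
    using assms(3) by (auto simp: add_eq_0_iff2)
  ultimately have "norm (u - 1) = norm (u + 1)"
    using force_factor_eq_imp_norm_eq[OF assms(1)] by blast
  then have "(norm (u - 1))\<^sup>2 = (norm (u + 1))\<^sup>2"
    by simp
  then show ?thesis
    by (simp add: cmod_power2 power2_diff power2_sum)
qed

definition axial_gradV :: "real \<Rightarrow> real \<Rightarrow> real \<Rightarrow> real" where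
  "axial_gradV \<alpha> \<mu> x = Re (gradV \<alpha> \<mu> (complex_of_real x))"

lemma gradV_of_real: "gradV \<alpha> \<mu> (complex_of_real x) = complex_of_real (axial_gradV \<alpha> \<mu> x)"
  by (simp add: complex_eq_iff Im_gradV axial_gradV_def)

lemma axial_gradV_uminus: "axial_gradV \<alpha> \<mu> (- x) = - axial_gradV \<alpha> \<mu> x"
  using gradV_uminus[of \<alpha> \<mu> "complex_of_real x"] by (simp add: axial_gradV_def)

lemma axial_gradV_eq:
  "axial_gradV \<alpha> \<mu> x = x - coupling \<alpha> \<mu> * (force_factor \<alpha> (x - 1) * (x - 1))
     - coupling \<alpha> \<mu> * (force_factor \<alpha> (x + 1) * (x + 1)) - \<mu> * coupling \<alpha> \<mu> * (force_factor \<alpha> x * x)"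
proof -
  have "norm (complex_of_real x - 1) = norm (x - 1)" "norm (complex_of_real x + 1) = norm (x + 1)"
    using norm_of_real[of "x - 1", where 'a = complex] norm_of_real[of "x + 1", where 'a = complex]
    by simp_all
  then show ?thesis
    by (simp add: axial_gradV_def gradV_def force_factor_def)
qed

lemma force_factor_mult_pos: "0 < x \<Longrightarrow> force_factor \<alpha> x * x = x powr (- \<alpha>)"
  using force_factor_mult_norm[of \<alpha> x] by simp

lemma axial_gradV_inner:
  assumes "0 < x" "x < 1"
  shows "axial_gradV \<alpha> \<mu> x = x + coupling \<alpha> \<mu> * (1 - x) powr (- \<alpha>)
     - coupling \<alpha> \<mu> * (1 + x) powr (- \<alpha>) - \<mu> * coupling \<alpha> \<mu> * x powr (- \<alpha>)"
proof -
  have "force_factor \<alpha> (x - 1) * (x - 1) = - (force_factor \<alpha> (1 - x) * (1 - x))"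
    using force_factor_uminus[of \<alpha> "1 - x"] by (simp add: algebra_simps)
  then show ?thesis
    using assms by (simp add: axial_gradV_eq force_factor_mult_pos add.commute)
qed

lemma axial_gradV_outer:
  assumes "1 < x"
  shows "axial_gradV \<alpha> \<mu> x = x - coupling \<alpha> \<mu> * (x - 1) powr (- \<alpha>)
     - coupling \<alpha> \<mu> * (x + 1) powr (- \<alpha>) - \<mu> * coupling \<alpha> \<mu> * x powr (- \<alpha>)"
  using assms by (simp add: axial_gradV_eq force_factor_mult_pos)

lemma strict_mono_on_axial_gradV_inner:
  assumes "0 < \<alpha>" "0 < \<mu>"
  shows "strict_mono_on {0<..<1} (axial_gradV \<alpha> \<mu>)"
proof (rule strict_mono_onI)
  fix a b :: real
  assume ab: "a \<in> {0<..<1}" "b \<in> {0<..<1}" "a < b"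
  have c: "0 < coupling \<alpha> \<mu>" "0 < \<mu> * coupling \<alpha> \<mu>"
    using coupling_pos[OF assms(2)] assms(2) by simp_all
  have "(1 - a) powr (- \<alpha>) < (1 - b) powr (- \<alpha>)" "(1 + b) powr (- \<alpha>) < (1 + a) powr (- \<alpha>)"
    "b powr (- \<alpha>) < a powr (- \<alpha>)"
    using assms ab by (auto intro!: powr_less_mono2_neg)
  then have "coupling \<alpha> \<mu> * (1 - a) powr (- \<alpha>) < coupling \<alpha> \<mu> * (1 - b) powr (- \<alpha>)"
    "coupling \<alpha> \<mu> * (1 + b) powr (- \<alpha>) < coupling \<alpha> \<mu> * (1 + a) powr (- \<alpha>)"
    "\<mu> * coupling \<alpha> \<mu> * b powr (- \<alpha>) < \<mu> * coupling \<alpha> \<mu> * a powr (- \<alpha>)"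
    using c by (simp_all only: mult_strict_left_mono)
  then show "axial_gradV \<alpha> \<mu> a < axial_gradV \<alpha> \<mu> b"
    using ab by (simp add: axial_gradV_inner)
qed

lemma strict_mono_on_axial_gradV_outer:
  assumes "0 < \<alpha>" "0 < \<mu>"
  shows "strict_mono_on {1<..} (axial_gradV \<alpha> \<mu>)"
proof (rule strict_mono_onI)
  fix a b :: real
  assume ab: "a \<in> {1<..}" "b \<in> {1<..}" "a < b"
  have c: "0 < coupling \<alpha> \<mu>" "0 < \<mu> * coupling \<alpha> \<mu>"
    using coupling_pos[OF assms(2)] assms(2) by simp_all
  have "(b - 1) powr (- \<alpha>) < (a - 1) powr (- \<alpha>)" "(b + 1) powr (- \<alpha>) < (a + 1) powr (- \<alpha>)"
    "b powr (- \<alpha>) < a powr (- \<alpha>)"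
    using assms ab by (auto intro!: powr_less_mono2_neg)
  then have "coupling \<alpha> \<mu> * (b - 1) powr (- \<alpha>) < coupling \<alpha> \<mu> * (a - 1) powr (- \<alpha>)"
    "coupling \<alpha> \<mu> * (b + 1) powr (- \<alpha>) < coupling \<alpha> \<mu> * (a + 1) powr (- \<alpha>)"
    "\<mu> * coupling \<alpha> \<mu> * b powr (- \<alpha>) < \<mu> * coupling \<alpha> \<mu> * a powr (- \<alpha>)"
    using c by (simp_all only: mult_strict_left_mono)
  then show "axial_gradV \<alpha> \<mu> a < axial_gradV \<alpha> \<mu> b"
    using ab by (simp add: axial_gradV_outer)
qed

lemma axial_gradV_root_inner:
  assumes "0 < \<alpha>" "0 < \<mu>"
  obtains r where "0 < r" "r < 1" "axial_gradV \<alpha> \<mu> r = 0"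
proof -
  define c where "c = coupling \<alpha> \<mu>"
  have "0 < c" using coupling_pos[OF assms(2)] by (simp add: c_def)
  define f where "f x = x + c * (1 - x) powr (- \<alpha>) - c * (1 + x) powr (- \<alpha>) - \<mu> * c * x powr (- \<alpha>)" for x
  have f: "axial_gradV \<alpha> \<mu> x = f x" if "x \<in> {0<..<1}" for x
    using that by (simp add: axial_gradV_inner f_def c_def)
  have "continuous_on {0<..<1} f"
    unfolding f_def by (intro continuous_intros) auto
  then have cont: "continuous_on {0<..<1} (axial_gradV \<alpha> \<mu>)"
    by (rule continuous_on_eq) (simp add: f)
  have "eventually (\<lambda>x. f x < 0) (at_right 0)"
    unfolding f_def using assms \<open>0 < c\<close> by real_asymp
  with eventually_at_right_real[OF zero_less_one]
  have neg: "eventually (\<lambda>x. x \<in> {0<..<1} \<and> axial_gradV \<alpha> \<mu> x < 0) (at_right 0)"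
    by eventually_elim (simp add: f)
  have "eventually (\<lambda>x. 0 < f x) (at_left 1)"
    unfolding f_def using assms \<open>0 < c\<close> by real_asymp
  with eventually_at_left_real[OF zero_less_one]
  have pos: "eventually (\<lambda>x. x \<in> {0<..<1} \<and> 0 < axial_gradV \<alpha> \<mu> x) (at_left 1)"
    by eventually_elim (simp add: f)
  have "\<exists>r\<in>{0<..<1}. axial_gradV \<alpha> \<mu> r = 0"
    by (rule exists_root_if_signs_eventually[OF _ cont neg _ pos]) auto
  with that show ?thesis by auto
qed

lemma axial_gradV_root_outer:
  assumes "0 < \<alpha>" "0 < \<mu>"
  obtains r where "1 < r" "axial_gradV \<alpha> \<mu> r = 0"
proof -
  define c where "c = coupling \<alpha> \<mu>"
  have "0 < c" using coupling_pos[OF assms(2)] by (simp add: c_def)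
  define f where "f x = x - c * (x - 1) powr (- \<alpha>) - c * (x + 1) powr (- \<alpha>) - \<mu> * c * x powr (- \<alpha>)" for x
  have f: "axial_gradV \<alpha> \<mu> x = f x" if "x \<in> {1<..}" for x
    using that by (simp add: axial_gradV_outer f_def c_def)
  have "continuous_on {1<..} f"
    unfolding f_def by (intro continuous_intros) auto
  then have cont: "continuous_on {1<..} (axial_gradV \<alpha> \<mu>)"
    by (rule continuous_on_eq) (simp add: f)
  have "eventually (\<lambda>x. f x < 0) (at_right 1)"
    unfolding f_def using assms \<open>0 < c\<close> by real_asymp
  with eventually_at_right_less[of 1]
  have neg: "eventually (\<lambda>x. x \<in> {1<..} \<and> axial_gradV \<alpha> \<mu> x < 0) (at_right 1)"
    by eventually_elim (simp add: f)
  have "eventually (\<lambda>x. 0 < f x) at_top"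
    unfolding f_def using assms \<open>0 < c\<close> by real_asymp
  with eventually_gt_at_top[of 1]
  have pos: "eventually (\<lambda>x. x \<in> {1<..} \<and> 0 < axial_gradV \<alpha> \<mu> x) at_top"
    by eventually_elim (simp add: f)
  have "\<exists>r\<in>{1<..}. axial_gradV \<alpha> \<mu> r = 0"
    by (rule exists_root_if_signs_eventually[OF _ cont neg _ pos]) auto
  with that show ?thesis by auto
qed

definition imag_axis_coeff :: "real \<Rightarrow> real \<Rightarrow> real \<Rightarrow> real" where
  "imag_axis_coeff \<alpha> \<mu> t = gradV_coeff \<alpha> \<mu> (complex_of_real t * \<i>)"

lemma imag_axis_coeff_eq:
  assumes "0 < t"
  shows "imag_axis_coeff \<alpha> \<mu> t = 1 - 2 * coupling \<alpha> \<mu> * sqrt (1 + t\<^sup>2) powr (- \<alpha> - 1)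
     - \<mu> * coupling \<alpha> \<mu> * t powr (- \<alpha> - 1)"
proof -
  have "norm (complex_of_real t * \<i> - 1) = sqrt (1 + t\<^sup>2)"
    "norm (complex_of_real t * \<i> + 1) = sqrt (1 + t\<^sup>2)" "norm (complex_of_real t * \<i>) = t"
    using assms by (simp_all add: cmod_def)
  then show ?thesis
    by (simp add: imag_axis_coeff_def gradV_coeff_def force_factor_def)
qed

lemma strict_mono_on_imag_axis_coeff:
  assumes "- 1 < \<alpha>" "0 < \<mu>"
  shows "strict_mono_on {0<..} (imag_axis_coeff \<alpha> \<mu>)"
proof (rule strict_mono_onI)
  fix a b :: real
  assume ab: "a \<in> {0<..}" "b \<in> {0<..}" "a < b"
  have c: "0 < coupling \<alpha> \<mu>" "0 < \<mu> * coupling \<alpha> \<mu>"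
    using coupling_pos[OF assms(2)] assms(2) by simp_all
  have "sqrt (1 + a\<^sup>2) < sqrt (1 + b\<^sup>2)"
    using ab by (simp add: power_strict_mono)
  then have "sqrt (1 + b\<^sup>2) powr (- \<alpha> - 1) < sqrt (1 + a\<^sup>2) powr (- \<alpha> - 1)"
    "b powr (- \<alpha> - 1) < a powr (- \<alpha> - 1)"
    using assms ab by (auto intro!: powr_less_mono2_neg add_pos_nonneg)
  then have "2 * coupling \<alpha> \<mu> * sqrt (1 + b\<^sup>2) powr (- \<alpha> - 1)
      < 2 * coupling \<alpha> \<mu> * sqrt (1 + a\<^sup>2) powr (- \<alpha> - 1)"
    "\<mu> * coupling \<alpha> \<mu> * b powr (- \<alpha> - 1) < \<mu> * coupling \<alpha> \<mu> * a powr (- \<alpha> - 1)"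
    using c by (simp_all only: mult_strict_left_mono)
  then show "imag_axis_coeff \<alpha> \<mu> a < imag_axis_coeff \<alpha> \<mu> b"
    using ab by (simp add: imag_axis_coeff_eq)
qed

text \<open>Here the value \<open>s = 2 powr -\<alpha>\<close> enters: \<open>c (2 powr -\<alpha> + \<mu>) = 1\<close> turns the claim into
  \<open>2 powr -\<alpha> < 2 powr ((1 - \<alpha>) / 2)\<close>.\<close>

lemma imag_axis_coeff_one_neg:
  assumes "- 1 < \<alpha>" "0 < \<mu>"
  shows "imag_axis_coeff \<alpha> \<mu> 1 < 0"
proof -
  define c where "c = coupling \<alpha> \<mu>"
  have "0 < c" using coupling_pos[OF assms(2)] by (simp add: c_def)
  have "0 < 2 powr (- \<alpha>) + \<mu>"
    using assms(2) by (simp add: add_pos_pos)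
  then have "c * (2 powr (- \<alpha>) + \<mu>) = 1"
    by (simp add: c_def coupling_def sMax_def)
  then have normalized: "c * 2 powr (- \<alpha>) + \<mu> * c = 1"
    by (simp add: algebra_simps)
  have "sqrt (1 + 1\<^sup>2) powr (- \<alpha> - 1) = 2 powr ((- \<alpha> - 1) / 2)"
    by (simp add: powr_half_sqrt[symmetric] powr_powr)
  moreover have "2 * 2 powr ((- \<alpha> - 1) / 2) = (2::real) powr (1 + (- \<alpha> - 1) / 2)"
    by (simp add: powr_add)
  moreover have "(2::real) powr (- \<alpha>) < 2 powr (1 + (- \<alpha> - 1) / 2)"
    using assms by (intro powr_less_mono) (auto simp: field_simps)
  ultimately have "c * 2 powr (- \<alpha>) < 2 * c * sqrt (1 + 1\<^sup>2) powr (- \<alpha> - 1)"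
    using \<open>0 < c\<close> by simp
  with normalized show ?thesis
    by (simp add: imag_axis_coeff_eq c_def)
qed

lemma imag_axis_coeff_root:
  assumes "0 < \<alpha>" "0 < \<mu>"
  obtains r where "1 < r" "imag_axis_coeff \<alpha> \<mu> r = 0"
proof -
  define c where "c = coupling \<alpha> \<mu>"
  have "0 < c" using coupling_pos[OF assms(2)] by (simp add: c_def)
  define f where "f t = 1 - 2 * c * sqrt (1 + t\<^sup>2) powr (- \<alpha> - 1) - \<mu> * c * t powr (- \<alpha> - 1)" for t
  have f: "imag_axis_coeff \<alpha> \<mu> t = f t" if "t \<in> {1..}" for t
    using that by (simp add: imag_axis_coeff_eq f_def c_def)
  have "continuous_on {1..} f"
    unfolding f_def by (intro continuous_intros) (auto simp: add_nonneg_eq_0_iff)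
  then have cont: "continuous_on {1..} (imag_axis_coeff \<alpha> \<mu>)"
    by (rule continuous_on_eq) (simp add: f)
  have neg: "eventually (\<lambda>t. t \<in> {1..} \<and> imag_axis_coeff \<alpha> \<mu> t < 0) (principal {1})"
    using imag_axis_coeff_one_neg[of \<alpha> \<mu>] assms by (simp add: eventually_principal)
  have "eventually (\<lambda>t. 0 < f t) at_top"
    unfolding f_def using assms \<open>0 < c\<close> by real_asymp
  with eventually_ge_at_top[of 1]
  have pos: "eventually (\<lambda>t. t \<in> {1..} \<and> 0 < imag_axis_coeff \<alpha> \<mu> t) at_top"
    by eventually_elim (simp add: f)
  have "\<exists>r\<in>{1..}. imag_axis_coeff \<alpha> \<mu> r = 0"
    by (rule exists_root_if_signs_eventually[OF _ cont neg _ pos]) (auto simp: principal_eq_bot_iff)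
  then obtain r where "r \<in> {1..}" "imag_axis_coeff \<alpha> \<mu> r = 0"
    by blast
  moreover have "r \<noteq> 1"
    using imag_axis_coeff_one_neg[of \<alpha> \<mu>] assms calculation by auto
  ultimately show ?thesis
    by (intro that) auto
qed

lemma gradV_imag_axis:
  "gradV \<alpha> \<mu> (complex_of_real t * \<i>) = complex_of_real (t * imag_axis_coeff \<alpha> \<mu> \<bar>t\<bar>) * \<i>"
proof -
  define u where "u = complex_of_real t * \<i>"
  have "norm (u - 1) = norm (u + 1)"
    by (simp add: u_def cmod_def)
  then have "Re (gradV \<alpha> \<mu> u) = 0"
    by (simp add: Re_gradV force_factor_def u_def)
  moreover have "gradV_coeff \<alpha> \<mu> u = imag_axis_coeff \<alpha> \<mu> \<bar>t\<bar>"
  proof (cases "0 \<le> t")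
    case False
    then have "u = - (complex_of_real \<bar>t\<bar> * \<i>)" by (simp add: u_def)
    then show ?thesis by (simp add: imag_axis_coeff_def gradV_coeff_uminus)
  qed (simp add: u_def imag_axis_coeff_def)
  then have "Im (gradV \<alpha> \<mu> u) = t * imag_axis_coeff \<alpha> \<mu> \<bar>t\<bar>"
    by (simp add: Im_gradV u_def)
  ultimately show ?thesis
    by (simp add: complex_eq_iff u_def)
qed

lemma has_real_derivative_V_line:
  assumes "1 < \<alpha>" "p + t *\<^sub>R d \<notin> {0, 1, -1}"
  shows "((\<lambda>t. V \<alpha> \<mu> (p + t *\<^sub>R d)) has_real_derivative gradV \<alpha> \<mu> (p + t *\<^sub>R d) \<bullet> d) (at t)"
proof -
  have "((\<lambda>t. p + t *\<^sub>R d) has_derivative (\<lambda>h. h *\<^sub>R d)) (at t)"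
    by (auto intro!: derivative_eq_intros)
  from has_derivative_compose[OF this has_derivative_V[OF assms]]
  show ?thesis
    by (simp add: has_field_derivative_def mult_commute_abs)
qed

text \<open>Since \<open>r\<close> is closer to \<open>1\<close> than to \<open>-1\<close>, the constant part of \<open>Re (gradV \<alpha> \<mu> r)\<close> is
  positive, so its radial part \<open>gradV_coeff \<alpha> \<mu> r * r\<close> is negative.\<close>

lemma gradV_coeff_neg_at_axial_root:
  assumes "- 1 < \<alpha>" "0 < \<mu>" "0 < r" "r \<noteq> 1" "axial_gradV \<alpha> \<mu> r = 0"
  shows "gradV_coeff \<alpha> \<mu> (complex_of_real r) < 0"
proof -
  have "norm (complex_of_real r - 1) = \<bar>r - 1\<bar>" "norm (complex_of_real r + 1) = r + 1"
    using assms(3) norm_of_real[of "r - 1", where 'a = complex] norm_of_real[of "r + 1", where 'a = complex]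
    by simp_all
  then have "force_factor \<alpha> (complex_of_real r + 1) < force_factor \<alpha> (complex_of_real r - 1)"
    using assms(1,3,4) by (intro force_factor_strict_antimono) auto
  then have "0 < coupling \<alpha> \<mu> * (force_factor \<alpha> (complex_of_real r - 1) - force_factor \<alpha> (complex_of_real r + 1))"
    using coupling_pos[OF assms(2)] by simp
  moreover have "gradV_coeff \<alpha> \<mu> (complex_of_real r) * r
      + coupling \<alpha> \<mu> * (force_factor \<alpha> (complex_of_real r - 1) - force_factor \<alpha> (complex_of_real r + 1)) = 0"
    using assms(5) Re_gradV[of \<alpha> \<mu> "complex_of_real r"] by (simp add: axial_gradV_def)
  ultimately have "gradV_coeff \<alpha> \<mu> (complex_of_real r) * r < 0"
    by linarith
  then show ?thesis
    using assms(3) by (simp add: mult_less_0_iff)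
qed

lemma not_local_min_pt_V_axial_root:
  assumes "1 < \<alpha>" "0 < \<mu>" "0 < r" "r \<noteq> 1" "axial_gradV \<alpha> \<mu> r = 0"
  shows "\<not> local_min_pt (V \<alpha> \<mu>) (complex_of_real r)"
proof -
  define p where "p = complex_of_real r"
  have "p \<notin> {0, 1, -1}"
    using assms(3,4) by (auto simp: p_def complex_eq_iff)
  have "isCont (\<lambda>t. gradV_coeff \<alpha> \<mu> (p + t *\<^sub>R \<i>)) 0"
    using \<open>p \<notin> {0, 1, -1}\<close> unfolding gradV_coeff_def force_factor_def
    by (intro continuous_intros) (auto simp: add_eq_0_iff2)
  then have "eventually (\<lambda>t. gradV_coeff \<alpha> \<mu> (p + t *\<^sub>R \<i>) < 0) (at 0)"
    using gradV_coeff_neg_at_axial_root[of \<alpha> \<mu> r] assms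
    by (intro order_tendstoD(2)) (auto simp: isCont_def p_def)
  then obtain \<delta> where "0 < \<delta>" and \<delta>: "\<And>t. t \<noteq> 0 \<Longrightarrow> \<bar>t\<bar> < \<delta> \<Longrightarrow> gradV_coeff \<alpha> \<mu> (p + t *\<^sub>R \<i>) < 0"
    by (auto simp: eventually_at dist_real_def)
  have vertical: "p + t *\<^sub>R \<i> \<notin> {0, 1, -1}" for t
    using \<open>p \<notin> {0, 1, -1}\<close> by (cases "t = 0") (auto simp: p_def complex_eq_iff)
  show ?thesis
    unfolding p_def[symmetric]
  proof (rule not_local_min_pt_if_descent[OF \<open>0 < \<delta>\<close> has_real_derivative_V_line[OF assms(1) vertical]])
    fix t :: real
    assume "0 < t" "t < \<delta>"
    then show "gradV \<alpha> \<mu> (p + t *\<^sub>R \<i>) \<bullet> \<i> < 0"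
      using \<delta>[of t] by (simp add: inner_complex_def Im_gradV p_def mult_neg_pos)
  qed
qed

lemma not_local_max_pt_V_axial_root:
  assumes "1 < \<alpha>" "0 < \<mu>" "0 < r" "r \<noteq> 1" "axial_gradV \<alpha> \<mu> r = 0"
  shows "\<not> local_max_pt (V \<alpha> \<mu>) (complex_of_real r)"
proof (rule not_local_max_pt_if_ascent)
  define \<delta> where "\<delta> = (if r < 1 then 1 - r else 1)"
  have horizontal: "complex_of_real r + t *\<^sub>R 1 = complex_of_real (r + t)" for t
    by (simp add: scaleR_conv_of_real)
  show "0 < \<delta>" using assms(3) by (simp add: \<delta>_def)
  fix t :: real
  assume "0 \<le> t" "t < \<delta>"
  then have "0 < r + t" "r + t \<noteq> 1"
    using assms(3,4) by (auto simp: \<delta>_def split: if_splits)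
  then show "((\<lambda>t. V \<alpha> \<mu> (complex_of_real r + t *\<^sub>R 1)) has_real_derivative
      gradV \<alpha> \<mu> (complex_of_real r + t *\<^sub>R 1) \<bullet> 1) (at t)"
    by (intro has_real_derivative_V_line[OF assms(1)]) (auto simp: horizontal complex_eq_iff)
next
  define \<delta> where "\<delta> = (if r < 1 then 1 - r else 1)"
  fix t :: real
  assume t: "0 < t" "t < \<delta>"
  have "axial_gradV \<alpha> \<mu> r < axial_gradV \<alpha> \<mu> (r + t)"
  proof (cases "r < 1")
    case True
    then show ?thesis
      using t assms(1-3) strict_mono_onD[OF strict_mono_on_axial_gradV_inner, of \<alpha> \<mu> r "r + t"]
      by (simp add: \<delta>_def)
  next
    case False
    then show ?thesis
      using t assms(1-4) strict_mono_onD[OF strict_mono_on_axial_gradV_outer, of \<alpha> \<mu> r "r + t"]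
      by (simp add: \<delta>_def)
  qed
  then show "0 < gradV \<alpha> \<mu> (complex_of_real r + t *\<^sub>R 1) \<bullet> 1"
    using assms(5) by (simp add: scaleR_conv_of_real axial_gradV_def inner_complex_def)
qed

lemma saddle_pt_V_axial_root:
  assumes "1 < \<alpha>" "0 < \<mu>" "0 < r" "r \<noteq> 1" "axial_gradV \<alpha> \<mu> r = 0"
  shows "saddle_pt (V \<alpha> \<mu>) (complex_of_real r)"
proof -
  have "complex_of_real r \<notin> {0, 1, -1}"
    using assms(3,4) by (auto simp: complex_eq_iff)
  then have "critical_point (V \<alpha> \<mu>) (complex_of_real r)"
    using assms(1,5) by (simp add: critical_point_V_iff gradV_of_real)
  then show ?thesis
    using not_local_min_pt_V_axial_root[OF assms] not_local_max_pt_V_axial_root[OF assms]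
    by (simp add: saddle_pt_def)
qed

lemma V_lower_bounds:
  assumes "1 < \<alpha>" "0 < \<mu>"
  shows "(norm v)\<^sup>2 / 2 \<le> V \<alpha> \<mu> v" "coupling \<alpha> \<mu> * phi \<alpha> (norm (v - 1)) \<le> V \<alpha> \<mu> v"
    "coupling \<alpha> \<mu> * phi \<alpha> (norm (v + 1)) \<le> V \<alpha> \<mu> v"
    "\<mu> * coupling \<alpha> \<mu> * phi \<alpha> (norm v) \<le> V \<alpha> \<mu> v"
proof -
  have "0 \<le> phi \<alpha> r" for r
    using assms(1) by (simp add: phi_def)
  then have nonneg: "0 \<le> coupling \<alpha> \<mu> * phi \<alpha> r" "0 \<le> \<mu> * coupling \<alpha> \<mu> * phi \<alpha> r" for r
    using coupling_pos[OF assms(2), of \<alpha>] assms(2) by simp_all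
  show "(norm v)\<^sup>2 / 2 \<le> V \<alpha> \<mu> v" "coupling \<alpha> \<mu> * phi \<alpha> (norm (v - 1)) \<le> V \<alpha> \<mu> v"
    "coupling \<alpha> \<mu> * phi \<alpha> (norm (v + 1)) \<le> V \<alpha> \<mu> v"
    "\<mu> * coupling \<alpha> \<mu> * phi \<alpha> (norm v) \<le> V \<alpha> \<mu> v"
    using V_eq[of \<alpha> \<mu> v] nonneg(1)[of "norm (v - 1)"] nonneg(1)[of "norm (v + 1)"]
      nonneg(2)[of "norm v"] zero_le_power2[of "norm v"]
    by linarith+
qed

lemma V_sublevel_bounds:
  assumes "1 < \<alpha>" "0 < \<mu>"
  obtains R \<delta> where "0 < \<delta>"
    "\<And>v. v \<notin> {0, 1, -1} \<Longrightarrow> V \<alpha> \<mu> v \<le> M \<Longrightarrow>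
       norm v \<le> R \<and> \<delta> \<le> norm v \<and> \<delta> \<le> norm (v - 1) \<and> \<delta> \<le> norm (v + 1)"
proof -
  define c where "c = coupling \<alpha> \<mu>"
  have "0 < c" "0 < \<mu> * c" using coupling_pos[OF assms(2)] assms(2) by (simp_all add: c_def)
  note lower = V_lower_bounds[OF assms, folded c_def]
  have "eventually (\<lambda>r. M < c * (r powr (1 - \<alpha>) / (\<alpha> - 1))) (at_right 0)"
    "eventually (\<lambda>r. M < \<mu> * c * (r powr (1 - \<alpha>) / (\<alpha> - 1))) (at_right 0)"
    using assms(1) \<open>0 < c\<close> \<open>0 < \<mu> * c\<close> by real_asymp+
  then have "eventually (\<lambda>r. M < c * phi \<alpha> r \<and> M < \<mu> * c * phi \<alpha> r) (at_right 0)"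
    unfolding phi_def by eventually_elim simp
  then obtain \<delta> where "0 < \<delta>" and \<delta>: "\<And>r. 0 < r \<Longrightarrow> r < \<delta> \<Longrightarrow> M < c * phi \<alpha> r \<and> M < \<mu> * c * phi \<alpha> r"
    by (auto simp: eventually_at_right_field)
  show ?thesis
  proof (rule that[OF \<open>0 < \<delta>\<close>])
    fix v
    assume v: "v \<notin> {0, 1, -1}" and "V \<alpha> \<mu> v \<le> M"
    then have "0 < norm v" "0 < norm (v - 1)" "0 < norm (v + 1)"
      by (auto simp: add_eq_0_iff2)
    have "(norm v)\<^sup>2 \<le> 2 * M"
      using lower(1)[of v] \<open>V \<alpha> \<mu> v \<le> M\<close> by simp
    moreover have "\<not> norm v < \<delta>" "\<not> norm (v - 1) < \<delta>" "\<not> norm (v + 1) < \<delta>"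
      using lower(2-4)[of v] \<open>V \<alpha> \<mu> v \<le> M\<close> \<open>0 < norm v\<close> \<open>0 < norm (v - 1)\<close> \<open>0 < norm (v + 1)\<close>
        \<delta>[of "norm v"] \<delta>[of "norm (v - 1)"] \<delta>[of "norm (v + 1)"]
      by linarith+
    ultimately show "norm v \<le> sqrt (2 * M) \<and> \<delta> \<le> norm v \<and> \<delta> \<le> norm (v - 1) \<and> \<delta> \<le> norm (v + 1)"
      by (simp add: real_le_rsqrt)
  qed
qed

lemma V_attains_global_min:
  assumes "1 < \<alpha>" "0 < \<mu>"
  obtains w where "w \<notin> {0, 1, -1 :: complex}" "\<And>v. v \<notin> {0, 1, -1 :: complex} \<Longrightarrow> V \<alpha> \<mu> w \<le> V \<alpha> \<mu> v"
proof -
  obtain R \<delta> where "0 < \<delta>" and bounds: "\<And>v. v \<notin> {0, 1, -1} \<Longrightarrow> V \<alpha> \<mu> v \<le> V \<alpha> \<mu> \<i> \<Longrightarrow>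
       norm v \<le> R \<and> \<delta> \<le> norm v \<and> \<delta> \<le> norm (v - 1) \<and> \<delta> \<le> norm (v + 1)"
    using V_sublevel_bounds[OF assms] by blast
  define K where "K = {v :: complex. norm v \<le> R \<and> \<delta> \<le> norm v \<and> \<delta> \<le> norm (v - 1) \<and> \<delta> \<le> norm (v + 1)}"
  have K_off: "v \<notin> {0, 1, -1}" if "v \<in> K" for v
    using that \<open>0 < \<delta>\<close> by (auto simp: K_def)
  have sublevel: "v \<in> K" if "v \<notin> {0, 1, -1}" "V \<alpha> \<mu> v \<le> V \<alpha> \<mu> \<i>" for v
    using bounds[OF that] by (simp add: K_def)
  have "\<i> \<in> K"
    by (rule sublevel) (auto simp: complex_eq_iff)
  have "compact K"
    unfolding K_def compact_eq_bounded_closed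
    by (intro conjI closed_Collect_conj closed_Collect_le continuous_intros) (auto simp: bounded_iff)
  moreover have "continuous_on K (V \<alpha> \<mu>)"
    using has_derivative_V[OF assms(1) K_off]
    by (intro continuous_at_imp_continuous_on ballI has_derivative_continuous) blast
  ultimately obtain w where "w \<in> K" and min: "\<And>v. v \<in> K \<Longrightarrow> V \<alpha> \<mu> w \<le> V \<alpha> \<mu> v"
    using continuous_attains_inf[of K "V \<alpha> \<mu>"] \<open>\<i> \<in> K\<close> by blast
  show ?thesis
  proof (rule that[OF K_off[OF \<open>w \<in> K\<close>]])
    fix v :: complex
    assume "v \<notin> {0, 1, -1}"
    show "V \<alpha> \<mu> w \<le> V \<alpha> \<mu> v"
    proof (cases "V \<alpha> \<mu> v \<le> V \<alpha> \<mu> \<i>")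
      case True
      with \<open>v \<notin> {0, 1, -1}\<close> show ?thesis by (intro min sublevel)
    next
      case False
      with min[OF \<open>\<i> \<in> K\<close>] show ?thesis by linarith
    qed
  qed
qed

lemma axial_gradV_root_cases:
  assumes "0 < \<alpha>" "0 < \<mu>"
    and r2: "0 < r2" "r2 < 1" "axial_gradV \<alpha> \<mu> r2 = 0"
    and r1: "1 < r1" "axial_gradV \<alpha> \<mu> r1 = 0"
    and y: "0 < y" "y \<noteq> 1" "axial_gradV \<alpha> \<mu> y = 0"
  shows "y = r2 \<or> y = r1"
proof (cases "y < 1")
  case True
  then show ?thesis
    using inj_onD[OF strict_mono_on_imp_inj_on[OF strict_mono_on_axial_gradV_inner], of \<alpha> \<mu> y r2]
      assms by simp
next
  case False
  then show ?thesis
    using inj_onD[OF strict_mono_on_imp_inj_on[OF strict_mono_on_axial_gradV_outer], of \<alpha> \<mu> y r1]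
      assms by simp
qed

lemma critical_point_V_real_axis:
  assumes "1 < \<alpha>" "0 < \<mu>"
    and r2: "0 < r2" "r2 < 1" "axial_gradV \<alpha> \<mu> r2 = 0"
    and r1: "1 < r1" "axial_gradV \<alpha> \<mu> r1 = 0"
    and "critical_point (V \<alpha> \<mu>) (complex_of_real x)"
  shows "\<bar>x\<bar> = r2 \<or> \<bar>x\<bar> = r1"
proof -
  have "complex_of_real x \<notin> {0, 1, -1}" and root: "axial_gradV \<alpha> \<mu> x = 0"
    using assms(1,8) by (simp_all add: critical_point_V_iff gradV_of_real)
  then have "0 < \<bar>x\<bar>" "\<bar>x\<bar> \<noteq> 1"
    by (auto simp: complex_eq_iff abs_if)
  moreover have "axial_gradV \<alpha> \<mu> \<bar>x\<bar> = 0"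
    using root by (simp add: abs_if axial_gradV_uminus)
  ultimately show ?thesis
    using axial_gradV_root_cases[OF _ assms(2) r2 r1] assms(1) by simp
qed

lemma critical_point_V_off_real_axis:
  assumes "1 < \<alpha>" "0 < \<mu>" "0 < r3" "imag_axis_coeff \<alpha> \<mu> r3 = 0"
    and "critical_point (V \<alpha> \<mu>) u" "Im u \<noteq> 0"
  shows "u = complex_of_real r3 * \<i> \<or> u = - (complex_of_real r3 * \<i>)"
proof -
  define y where "y = Im u"
  have "u \<notin> {0, 1, -1}" and zero: "gradV \<alpha> \<mu> u = 0"
    using assms(1,5) by (simp_all add: critical_point_V_iff)
  then have "Re u = 0"
    using gradV_zero_off_real_axis[of \<alpha> \<mu> u] assms(1,2,6) by simp
  then have u: "u = complex_of_real y * \<i>"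
    by (simp add: complex_eq_iff y_def)
  have "y \<noteq> 0"
    using assms(6) by (simp add: y_def)
  then have "imag_axis_coeff \<alpha> \<mu> \<bar>y\<bar> = 0"
    using zero gradV_imag_axis[of \<alpha> \<mu> y] by (simp add: u)
  then have "\<bar>y\<bar> = r3"
    using inj_onD[OF strict_mono_on_imp_inj_on[OF strict_mono_on_imag_axis_coeff], of \<alpha> \<mu> "\<bar>y\<bar>" r3]
      assms(1-4) \<open>y \<noteq> 0\<close> by simp
  then show ?thesis
    by (cases "0 \<le> y") (auto simp: u)
qed

lemma critical_points_V:
  assumes "1 < \<alpha>" "0 < \<mu>"
    and r2: "0 < r2" "r2 < 1" "axial_gradV \<alpha> \<mu> r2 = 0"
    and r1: "1 < r1" "axial_gradV \<alpha> \<mu> r1 = 0"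
    and r3: "0 < r3" "imag_axis_coeff \<alpha> \<mu> r3 = 0"
  shows "{u. critical_point (V \<alpha> \<mu>) u} =
    {complex_of_real r2, - complex_of_real r2, complex_of_real r1, - complex_of_real r1,
     complex_of_real r3 * \<i>, - (complex_of_real r3 * \<i>)}" (is "_ = ?C")
proof (intro set_eqI iffI)
  fix u
  assume "u \<in> {u. critical_point (V \<alpha> \<mu>) u}"
  then have crit: "critical_point (V \<alpha> \<mu>) u" by simp
  show "u \<in> ?C"
  proof (cases "Im u = 0")
    case True
    define x where "x = Re u"
    have u: "u = complex_of_real x"
      using True by (simp add: complex_eq_iff x_def)
    with crit have "\<bar>x\<bar> = r2 \<or> \<bar>x\<bar> = r1"
      by (intro critical_point_V_real_axis[OF assms(1,2) r2 r1]) simp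
    then show ?thesis
      by (auto simp: u abs_if split: if_splits)
  next
    case False
    with crit show ?thesis
      using critical_point_V_off_real_axis[OF assms(1,2) r3] by blast
  qed
next
  fix u
  assume u: "u \<in> ?C"
  moreover have "gradV \<alpha> \<mu> (complex_of_real r2) = 0" "gradV \<alpha> \<mu> (complex_of_real r1) = 0"
    "gradV \<alpha> \<mu> (complex_of_real r3 * \<i>) = 0"
    using r1 r2 r3 by (simp_all add: gradV_of_real gradV_imag_axis)
  ultimately have "gradV \<alpha> \<mu> u = 0"
    by (auto simp: gradV_uminus)
  moreover have "u \<notin> {0, 1, -1}"
    using u r1 r2 r3 by (auto simp: complex_eq_iff)
  ultimately show "u \<in> {u. critical_point (V \<alpha> \<mu>) u}"
    using critical_point_V_iff[OF assms(1)] by simp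
qed

lemma critical_point_V_if_global_min:
  assumes "1 < \<alpha>" "w \<notin> {0, 1, -1}" "\<And>v. v \<notin> {0, 1, -1} \<Longrightarrow> V \<alpha> \<mu> w \<le> V \<alpha> \<mu> v"
  shows "critical_point (V \<alpha> \<mu>) w"
proof -
  have "open (- {0, 1, -1 :: complex})"
    by (intro open_Compl) simp
  then have "(\<lambda>h. gradV \<alpha> \<mu> w \<bullet> h) = (\<lambda>h. 0)"
    using assms(2,3) by (intro differential_zero_maxmin[OF _ _ has_derivative_V[OF assms(1,2)]]) auto
  then show ?thesis
    using has_derivative_V[OF assms(1,2), of \<mu>] assms(2) by (simp add: critical_point_def)
qed

lemma minimum_pt_V_imag_axis:
  assumes "1 < \<alpha>" "0 < \<mu>"
    and r2: "0 < r2" "r2 < 1" "axial_gradV \<alpha> \<mu> r2 = 0"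
    and r1: "1 < r1" "axial_gradV \<alpha> \<mu> r1 = 0"
    and r3: "0 < r3" "imag_axis_coeff \<alpha> \<mu> r3 = 0"
  shows "minimum_pt (V \<alpha> \<mu>) (complex_of_real r3 * \<i>)"
proof -
  define z where "z = complex_of_real r3 * \<i>"
  note critical_set = critical_points_V[OF assms(1,2) r2 r1 r3, folded z_def]
  have "open (- {0, 1, -1 :: complex})"
    by (intro open_Compl) simp
  obtain w where "w \<notin> {0, 1, -1}" and w_min: "\<And>v. v \<notin> {0, 1, -1} \<Longrightarrow> V \<alpha> \<mu> w \<le> V \<alpha> \<mu> v"
    using V_attains_global_min[OF assms(1,2)] by blast
  then have "local_min_pt (V \<alpha> \<mu>) w"
    by (intro local_min_pt_if_min_on_open[OF \<open>open (- {0, 1, -1})\<close>]) auto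
  have saddle: "\<not> local_min_pt (V \<alpha> \<mu>) (complex_of_real r)" "\<not> local_min_pt (V \<alpha> \<mu>) (- complex_of_real r)"
    if "0 < r" "r \<noteq> 1" "axial_gradV \<alpha> \<mu> r = 0" for r
    using not_local_min_pt_V_axial_root[OF assms(1,2) that] local_min_pt_uminus_iff[of "V \<alpha> \<mu>", OF V_uminus]
    by simp_all
  have "w \<in> {complex_of_real r2, - complex_of_real r2, complex_of_real r1, - complex_of_real r1, z, - z}"
    using critical_point_V_if_global_min[OF assms(1) \<open>w \<notin> {0, 1, -1}\<close> w_min] critical_set by blast
  moreover have "\<not> local_min_pt (V \<alpha> \<mu>) (complex_of_real r1)" "\<not> local_min_pt (V \<alpha> \<mu>) (- complex_of_real r1)"
    "\<not> local_min_pt (V \<alpha> \<mu>) (complex_of_real r2)" "\<not> local_min_pt (V \<alpha> \<mu>) (- complex_of_real r2)"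
    using saddle[of r1] saddle[of r2] r1 r2 by simp_all
  ultimately have "w = z \<or> w = - z"
    using \<open>local_min_pt (V \<alpha> \<mu>) w\<close> by blast
  then have "V \<alpha> \<mu> z = V \<alpha> \<mu> w"
    by (auto simp: V_uminus)
  moreover have "z \<notin> {0, 1, -1}"
    using r3 by (auto simp: z_def complex_eq_iff)
  ultimately have "local_min_pt (V \<alpha> \<mu>) z"
    using w_min by (intro local_min_pt_if_min_on_open[OF \<open>open (- {0, 1, -1})\<close>]) auto
  moreover have "critical_point (V \<alpha> \<mu>) z"
    using critical_set by blast
  ultimately show ?thesis
    by (simp add: minimum_pt_def z_def)
qed

theorem mainTheorem11:
  fixes \<alpha> \<mu> :: real
  assumes "1 < \<alpha>" "\<alpha> < 3" "0 < \<mu>"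
  shows "\<exists>r1 r2 r3 :: real. 0 < r2 \<and> r2 < 1 \<and> 1 < r1 \<and> 1 < r3 \<and>
    {u. critical_point (V \<alpha> \<mu>) u} =
      {complex_of_real r2, - complex_of_real r2, complex_of_real r1, - complex_of_real r1,
       complex_of_real r3 * cis (pi / 2), - (complex_of_real r3 * cis (pi / 2))} \<and>
    saddle_pt (V \<alpha> \<mu>) (complex_of_real r2) \<and>
    saddle_pt (V \<alpha> \<mu>) (complex_of_real r1) \<and>
    minimum_pt (V \<alpha> \<mu>) (complex_of_real r3 * cis (pi / 2))"
proof -
  have "0 < \<alpha>" using assms(1) by simp
  obtain r2 where r2: "0 < r2" "r2 < 1" "axial_gradV \<alpha> \<mu> r2 = 0"
    using axial_gradV_root_inner[OF \<open>0 < \<alpha>\<close> assms(3)] .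
  obtain r1 where r1: "1 < r1" "axial_gradV \<alpha> \<mu> r1 = 0"
    using axial_gradV_root_outer[OF \<open>0 < \<alpha>\<close> assms(3)] .
  obtain r3 where r3: "1 < r3" "imag_axis_coeff \<alpha> \<mu> r3 = 0"
    using imag_axis_coeff_root[OF \<open>0 < \<alpha>\<close> assms(3)] .
  have "0 < r3" using r3 by simp
  show ?thesis
    using r1 r2 r3 critical_points_V[OF assms(1,3) r2 r1 \<open>0 < r3\<close> r3(2)]
      saddle_pt_V_axial_root[OF assms(1,3) r2(1) _ r2(3)] saddle_pt_V_axial_root[OF assms(1,3) _ _ r1(2)]
      minimum_pt_V_imag_axis[OF assms(1,3) r2 r1 \<open>0 < r3\<close> r3(2)]
    by (intro exI[of _ r1] exI[of _ r2] exI[of _ r3]) simp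
qed

end
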